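(* Let $u,v,w$ be three pairwise non-adjacent vertices in a $\{P_5,\overline{P_5}\}$-free graph $G$, and suppose $w$ is mixed on a set $A\subseteq N(u)\cap N(v)$ with $G[A]$ anticonnected. Then no vertex $z\in N(w)\setminus(A\cup\{u,v\})$ is mixed on $\{u,v\}$.
   Context: All graphs are finite and simple. $N(x)$ is the set of neighbors of $x$. $P_5$ is the path on five vertices, $\overline{P_5}$ its complement; $G$ is $\mathcal F$-free if it has no induced subgraph isomorphic to a member of $\mathcal F$. A graph is anticonnected if its complement is connected. A vertex $b\notin X$ is mixed on $X$ if it has both a neighbor and a non-neighbor in $X$. *)

theory Defs
  imports Main
begin

definition graph :: "'a set \<Rightarrow> ('a \<Rightarrow> 'a \<Rightarrow> bool) \<Rightarrow> bool" where
  "graph V E \<longleftrightarrow> finite V \<and> (\<forall>x y. E x y \<longrightarrow> x \<in> V \<and> y \<in> V)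
                 \<and> (\<forall>x y. E x y \<longrightarrow> E y x) \<and> (\<forall>x. \<not> E x x)"

definition nbhd :: "'a set \<Rightarrow> ('a \<Rightarrow> 'a \<Rightarrow> bool) \<Rightarrow> 'a \<Rightarrow> 'a set" where
  "nbhd V E x = {y \<in> V. E x y}"

definition has_induced_P5 :: "'a set \<Rightarrow> ('a \<Rightarrow> 'a \<Rightarrow> bool) \<Rightarrow> bool" where
  "has_induced_P5 V E \<longleftrightarrow> (\<exists>p :: nat \<Rightarrow> 'a. inj_on p {0..<5} \<and> p ` {0..<5} \<subseteq> V \<and>
     (\<forall>i<5. \<forall>j<5. i \<noteq> j \<longrightarrow> (E (p i) (p j) \<longleftrightarrow> i + 1 = j \<or> j + 1 = i)))"

definition has_induced_co_P5 :: "'a set \<Rightarrow> ('a \<Rightarrow> 'a \<Rightarrow> bool) \<Rightarrow> bool" where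
  "has_induced_co_P5 V E \<longleftrightarrow> (\<exists>p :: nat \<Rightarrow> 'a. inj_on p {0..<5} \<and> p ` {0..<5} \<subseteq> V \<and>
     (\<forall>i<5. \<forall>j<5. i \<noteq> j \<longrightarrow> (E (p i) (p j) \<longleftrightarrow> \<not> (i + 1 = j \<or> j + 1 = i))))"

definition P5_coP5_free :: "'a set \<Rightarrow> ('a \<Rightarrow> 'a \<Rightarrow> bool) \<Rightarrow> bool" where
  "P5_coP5_free V E \<longleftrightarrow> \<not> has_induced_P5 V E \<and> \<not> has_induced_co_P5 V E"

definition anticonnected :: "('a \<Rightarrow> 'a \<Rightarrow> bool) \<Rightarrow> 'a set \<Rightarrow> bool" where
  "anticonnected E A \<longleftrightarrow> A \<noteq> {} \<and>
     (\<forall>x\<in>A. \<forall>y\<in>A. (\<lambda>a b. a \<in> A \<and> b \<in> A \<and> a \<noteq> b \<and> \<not> E a b)\<^sup>*\<^sup>* x y)"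

definition mixed :: "('a \<Rightarrow> 'a \<Rightarrow> bool) \<Rightarrow> 'a \<Rightarrow> 'a set \<Rightarrow> bool" where
  "mixed E b X \<longleftrightarrow> b \<notin> X \<and> (\<exists>x\<in>X. E b x) \<and> (\<exists>x\<in>X. \<not> E b x)"

end

theory Submission
  imports Defs
begin

text \<open>
  Anticonnectedness of \<open>G[A]\<close> turns the mixedness of \<open>w\<close> on \<open>A\<close> into a non-adjacent pair
  \<open>a, b \<in> A\<close> with \<open>w\<close> adjacent to \<open>a\<close> but not to \<open>b\<close>. Suppose \<open>z \<in> N(w)\<close> sees \<open>u\<close> but not \<open>v\<close>.
  If \<open>z\<close> misses \<open>b\<close>, then \<open>v-b-u-z-w\<close> is an induced \<open>P\<^sub>5\<close>; otherwise \<open>u, w, b, a, z\<close>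
  (if \<open>z\<close> misses \<open>a\<close>) or \<open>a, b, w, v, z\<close> (if \<open>z\<close> sees \<open>a\<close>) induces a \<open>P\<^sub>5\<close> in the complement.
\<close>

lemma less_5_cases: "(i::nat) < 5 \<longleftrightarrow> i = 0 \<or> i = 1 \<or> i = 2 \<or> i = 3 \<or> i = 4"
  by auto

lemma graph_sym: "graph V E \<Longrightarrow> E x y \<Longrightarrow> E y x"
  and graph_irrefl: "graph V E \<Longrightarrow> \<not> E x x"
  and graph_edge_in_V: "graph V E \<Longrightarrow> E x y \<Longrightarrow> x \<in> V \<and> y \<in> V"
  unfolding graph_def by blast+

lemma has_induced_P5I:
  assumes "graph V E" and "distinct [x0, x1, x2, x3, x4]"
    and "E x0 x1" "E x1 x2" "E x2 x3" "E x3 x4"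
    and "\<not> E x0 x2" "\<not> E x0 x3" "\<not> E x0 x4" "\<not> E x1 x3" "\<not> E x1 x4" "\<not> E x2 x4"
  shows "has_induced_P5 V E"
  unfolding has_induced_P5_def
proof (intro exI[of _ "\<lambda>i. [x0, x1, x2, x3, x4] ! i"] conjI)
  show "inj_on (\<lambda>i. [x0, x1, x2, x3, x4] ! i) {0..<5}"
    using assms(2) unfolding inj_on_def by (auto simp: less_5_cases)
  show "(\<lambda>i. [x0, x1, x2, x3, x4] ! i) ` {0..<5} \<subseteq> V"
    using assms(3-6) graph_edge_in_V[OF assms(1)]
    by (auto simp: less_5_cases)
  show "\<forall>i<5. \<forall>j<5. i \<noteq> j \<longrightarrow>
      E ([x0, x1, x2, x3, x4] ! i) ([x0, x1, x2, x3, x4] ! j) = (i + 1 = j \<or> j + 1 = i)"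
    unfolding less_5_cases using assms(3-) graph_sym[OF assms(1)] by auto
qed

lemma has_induced_co_P5I:
  assumes "graph V E" and "distinct [x0, x1, x2, x3, x4]"
    and "\<not> E x0 x1" "\<not> E x1 x2" "\<not> E x2 x3" "\<not> E x3 x4"
    and "E x0 x2" "E x0 x3" "E x0 x4" "E x1 x3" "E x1 x4" "E x2 x4"
  shows "has_induced_co_P5 V E"
  unfolding has_induced_co_P5_def
proof (intro exI[of _ "\<lambda>i. [x0, x1, x2, x3, x4] ! i"] conjI)
  show "inj_on (\<lambda>i. [x0, x1, x2, x3, x4] ! i) {0..<5}"
    using assms(2) unfolding inj_on_def by (auto simp: less_5_cases)
  show "(\<lambda>i. [x0, x1, x2, x3, x4] ! i) ` {0..<5} \<subseteq> V"
    using assms(7-) graph_edge_in_V[OF assms(1)]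
    by (auto simp: less_5_cases)
  show "\<forall>i<5. \<forall>j<5. i \<noteq> j \<longrightarrow>
      E ([x0, x1, x2, x3, x4] ! i) ([x0, x1, x2, x3, x4] ! j) = (\<not> (i + 1 = j \<or> j + 1 = i))"
    unfolding less_5_cases using assms(3-) graph_sym[OF assms(1)] by auto
qed

text \<open>Walk along a path of non-edges in \<open>A\<close> from a neighbour of \<open>w\<close> to a non-neighbour:
  some step of the walk leaves \<open>N(w)\<close>.\<close>
lemma anticonnected_mixed_obtains_nonadjacent_pair:
  assumes "anticonnected E A" and "mixed E w A"
  obtains a b where "a \<in> A" "b \<in> A" "E w a" "\<not> E w b" "\<not> E a b"
proof -
  obtain x y where x: "x \<in> A" "E w x" and y: "y \<in> A" "\<not> E w y"
    using assms(2) unfolding mixed_def by blast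
  have "(\<lambda>a b. a \<in> A \<and> b \<in> A \<and> a \<noteq> b \<and> \<not> E a b)\<^sup>*\<^sup>* x y"
    using assms(1) x y unfolding anticonnected_def by blast
  then have "\<not> E w y \<longrightarrow> (\<exists>a\<in>A. \<exists>b\<in>A. E w a \<and> \<not> E w b \<and> \<not> E a b)"
    by (induction rule: rtranclp_induct) (use x in blast)+
  with y that show ?thesis by blast
qed

lemma P5_coP5_free_no_one_sided_neighbour:
  assumes G: "graph V E" and free: "P5_coP5_free V E"
    and "\<not> E u v" "\<not> E u w" "\<not> E v w"
    and "E u a" "E v a" "E u b" "E v b" "E w a" "\<not> E w b" "\<not> E a b"
    and "E w z" "E z u" "\<not> E z v"
  shows False
proof -
  note sym = graph_sym[OF G] and irrefl = graph_irrefl[OF G]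
  have distinct: "distinct [u, v, w, a, b, z]"
    using assms(3-) sym irrefl by auto
  consider "\<not> E z b" | "E z b" "\<not> E z a" | "E z b" "E z a"
    by blast
  then show False
  proof cases
    case 1
    have "has_induced_P5 V E"
      by (rule has_induced_P5I[OF G, of v b u z w]) (use assms(3-) sym distinct 1 in auto)
    with free show False unfolding P5_coP5_free_def by blast
  next
    case 2
    have "has_induced_co_P5 V E"
      by (rule has_induced_co_P5I[OF G, of u w b a z]) (use assms(3-) sym distinct 2 in auto)
    with free show False unfolding P5_coP5_free_def by blast
  next
    case 3
    have "has_induced_co_P5 V E"
      by (rule has_induced_co_P5I[OF G, of a b w v z]) (use assms(3-) sym distinct 3 in auto)
    with free show False unfolding P5_coP5_free_def by blast
  qed
qed

theorem lemma2p6: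
  fixes V :: "'a set" and E :: "'a \<Rightarrow> 'a \<Rightarrow> bool" and u v w :: 'a and A :: "'a set"
  assumes "graph V E" and "P5_coP5_free V E"
    and "u \<in> V" and "v \<in> V" and "w \<in> V"
    and "u \<noteq> v" and "u \<noteq> w" and "v \<noteq> w"
    and "\<not> E u v" and "\<not> E u w" and "\<not> E v w"
    and "A \<subseteq> nbhd V E u \<inter> nbhd V E v"
    and "anticonnected E A"
    and "mixed E w A"
  shows "\<forall>z \<in> nbhd V E w - (A \<union> {u, v}). \<not> mixed E z {u, v}"
proof (intro ballI notI)
  fix z assume "z \<in> nbhd V E w - (A \<union> {u, v})" and "mixed E z {u, v}"
  then have wz: "E w z" and one_sided: "E z u \<and> \<not> E z v \<or> E z v \<and> \<not> E z u"
    unfolding nbhd_def mixed_def by auto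
  obtain a b where "a \<in> A" "b \<in> A" "E w a" "\<not> E w b" "\<not> E a b"
    using anticonnected_mixed_obtains_nonadjacent_pair[OF assms(13,14)] .
  moreover from calculation assms(12) have "E u a" "E v a" "E u b" "E v b"
    unfolding nbhd_def by auto
  moreover have "\<not> E v u" using assms(9) graph_sym[OF assms(1)] by blast
  ultimately show False
    using wz one_sided P5_coP5_free_no_one_sided_neighbour[OF assms(1,2), of u v w a b z]
      P5_coP5_free_no_one_sided_neighbour[OF assms(1,2), of v u w a b z] assms(9-11)
    by blast
qed

end
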